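(* Let $G=(S,R,\rho)$ be a $q$-linear grammar and $D$ its $q$-derivative. Then for all $n\ge1$ and $f,g\in\mathbb{E}$, \[ D^n(fg)=\sum_{k=0}^n{n\brack k}_q\,D^k(f)\,\uparrow^k\!\big(D^{n-k}(g)\big). \]
   Context: $\mathbb{K}$ is a commutative ring with unity and characteristic zero, $q$ an indeterminate. For a set $S$ of master variables, $\mathbb{S}=\{s_i:s\in S,\ i\ge0\}$ is a set of non-commuting variables, $F(\mathbb{S})$ the free group on $\mathbb{S}$, $\mathbb{E}=\mathbb{K}[q][F(\mathbb{S})]$ its group algebra. A rule $R$ assigns to each $s_i$ an element $R(s_i)\in\mathbb{E}$, extended by $R(s_i^{-1})=-s_i^{-1}R(s_i)s_{i+1}^{-1}$. The up-arrow $\uparrow:\mathbb{E}\to\mathbb{E}$ is the $\mathbb{K}[q]$-linear map replacing each letter $s_i^{\pm1}$ of a word by $s_{i+1}^{\pm1}$, and $\uparrow^k$ is its $k$-th iterate. An order is a map rewriting each word by permuting its letters (extended linearly); KSO is the identity. A $q$-grammar is a triple $(S,R,\rho)$ with $\rho$ an order; its $q$-derivative is the $\mathbb{K}[q]$-linear map with $D(w_1\cdots w_n)=\sum_{j=1}^n\rho\big(w_1\cdots w_{j-1}R(w_j)\uparrow(w_{j+1}\cdots w_n)\big)$ for letters $w_j\in\mathbb{S}\cup\mathbb{S}^{-1}$, $D^0=\mathrm{id}$, $D^k=D\circ D^{k-1}$. A $q$-grammar is $q$-linear if $\rho=\mathrm{KSO}$ and $R(s_{i+1})=q\uparrow R(s_i)$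 for every $s_i\in\mathbb{S}$. ${n\brack k}_q=\frac{(q;q)_n}{(q;q)_k(q;q)_{n-k}}$, $(q;q)_n=\prod_{i=1}^n(1-q^i)$. *)

theory Defs
  imports "HOL-Library.Poly_Mapping" "HOL-Computational_Algebra.Polynomial"
begin

text \<open>Letters of the free group on the variables s_i: (s, i, True) is s_i,
  (s, i, False) is its inverse.  Elements of the free group F(S) are reduced words.\<close>
type_synonym 's letter = "'s \<times> nat \<times> bool"

definition inv_pair :: "'s letter \<Rightarrow> 's letter \<Rightarrow> bool" where
  "inv_pair x y \<longleftrightarrow> fst x = fst y \<and> fst (snd x) = fst (snd y) \<and> snd (snd x) \<noteq> snd (snd y)"

fun reduced :: "'s letter list \<Rightarrow> bool" where
  "reduced (x # y # ys) \<longleftrightarrow> \<not> inv_pair x y \<and> reduced (y # ys)"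
| "reduced _ \<longleftrightarrow> True"

definition red_cons :: "'s letter \<Rightarrow> 's letter list \<Rightarrow> 's letter list" where
  "red_cons x w = (case w of [] \<Rightarrow> [x] | y # ys \<Rightarrow> (if inv_pair x y then ys else x # w))"

definition red :: "'s letter list \<Rightarrow> 's letter list" where
  "red w = foldr red_cons w []"

text \<open>The group algebra E = K[q][F(S)]: finitely supported maps from reduced words to K[q].\<close>
type_synonym ('s, 'k) E = "'s letter list \<Rightarrow>\<^sub>0 'k poly"

definition inE :: "('s, 'k::comm_ring_1) E \<Rightarrow> bool" where
  "inE f \<longleftrightarrow> Poly_Mapping.keys f \<subseteq> {w. reduced w}"

definition multE :: "('s, 'k::comm_ring_1) E \<Rightarrow> ('s, 'k) E \<Rightarrow> ('s, 'k) E" where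
  "multE f g = (\<Sum>u\<in>Poly_Mapping.keys f. \<Sum>v\<in>Poly_Mapping.keys g.
      Poly_Mapping.single (red (u @ v)) (Poly_Mapping.lookup f u * Poly_Mapping.lookup g v))"

definition smultE :: "'k::comm_ring_1 poly \<Rightarrow> ('s, 'k) E \<Rightarrow> ('s, 'k) E" where
  "smultE c f = Poly_Mapping.map (\<lambda>a. c * a) f"

definition gen :: "'s letter list \<Rightarrow> ('s, 'k::comm_ring_1) E" where
  "gen w = Poly_Mapping.single (red w) 1"

definition lett :: "'s letter \<Rightarrow> ('s, 'k::comm_ring_1) E" where
  "lett x = gen [x]"

definition linE :: "('s letter list \<Rightarrow> ('s, 'k::comm_ring_1) E) \<Rightarrow> ('s, 'k) E \<Rightarrow> ('s, 'k) E" where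
  "linE \<phi> f = (\<Sum>w\<in>Poly_Mapping.keys f. smultE (Poly_Mapping.lookup f w) (\<phi> w))"

definition up_letter :: "'s letter \<Rightarrow> 's letter" where
  "up_letter x = (fst x, Suc (fst (snd x)), snd (snd x))"

definition upE :: "('s, 'k::comm_ring_1) E \<Rightarrow> ('s, 'k) E" where
  "upE = linE (\<lambda>w. gen (map up_letter w))"

definition R_letter :: "('s \<times> nat \<Rightarrow> ('s, 'k::comm_ring_1) E) \<Rightarrow> 's letter \<Rightarrow> ('s, 'k) E" where
  "R_letter R x = (case x of (s, i, True) \<Rightarrow> R (s, i)
     | (s, i, False) \<Rightarrow> - multE (multE (lett (s, i, False)) (R (s, i))) (lett (s, Suc i, False)))"

definition D_word :: "('s \<times> nat \<Rightarrow> ('s, 'k::comm_ring_1) E) \<Rightarrow> (('s, 'k) E \<Rightarrow> ('s, 'k) E)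
    \<Rightarrow> 's letter list \<Rightarrow> ('s, 'k) E" where
  "D_word R \<rho> w = (\<Sum>j<length w.
      \<rho> (multE (multE (gen (take j w)) (R_letter R (w ! j))) (upE (gen (drop (Suc j) w)))))"

definition qderiv :: "('s \<times> nat \<Rightarrow> ('s, 'k::comm_ring_1) E) \<Rightarrow> (('s, 'k) E \<Rightarrow> ('s, 'k) E)
    \<Rightarrow> ('s, 'k) E \<Rightarrow> ('s, 'k) E" where
  "qderiv R \<rho> = linE (D_word R \<rho>)"

definition qvar :: "'k::comm_ring_1 poly" where
  "qvar = [:0, 1:]"

text \<open>q-linear grammar: order is KSO (identity) and R(s_{i+1}) = q \<up> R(s_i).\<close>
definition q_linear :: "('s \<times> nat \<Rightarrow> ('s, 'k::comm_ring_1) E) \<Rightarrow> (('s, 'k) E \<Rightarrow> ('s, 'k) E) \<Rightarrow> bool" where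
  "q_linear R \<rho> \<longleftrightarrow> \<rho> = id \<and> (\<forall>s i. R (s, Suc i) = smultE qvar (upE (R (s, i))))"

definition qpoch_int :: "nat \<Rightarrow> int poly" where
  "qpoch_int n = (\<Prod>i=1..n. 1 - monom 1 i)"

text \<open>q-binomial coefficient: the exact quotient in Z[q], mapped into K[q].\<close>
definition qbinom :: "nat \<Rightarrow> nat \<Rightarrow> 'k::comm_ring_1 poly" where
  "qbinom n k = map_poly of_int (qpoch_int n div (qpoch_int k * qpoch_int (n - k)))"

end

theory Submission
  imports Defs
begin

text \<open>The KSO q-derivative satisfies the twisted Leibniz rule
  D(f g) = D(f) \<up>(g) + f D(g). On words this is the splitting of the sum over letter positions;
  it is compatible with free reduction because the rule for inverse letters makes D vanish on
  s_i s_i^-1 and s_i^-1 s_i. Shifting the rule, R(s_{i+1}) = q \<up>R(s_i), gives D \<up> = q \<up> D, hence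
  D \<up>^k = q^k \<up>^k D. Iterating the twisted Leibniz rule then produces coefficients obeying the
  q-Pascal recurrence [n+1, k+1] = [n, k] + q^(k+1) [n, k+1], just as binomial coefficients arise in
  the classical Leibniz formula.\<close>

section \<open>Linear maps on the group algebra\<close>

lemma lookup_smultE [simp]: "Poly_Mapping.lookup (smultE c f) w = c * Poly_Mapping.lookup f w"
  unfolding smultE_def by (simp add: Poly_Mapping.map.rep_eq when_def)

interpretation smultE: module "smultE :: 'k::comm_ring_1 poly \<Rightarrow> ('s, 'k) E \<Rightarrow> ('s, 'k) E"
  by unfold_locales (auto intro!: poly_mapping_eqI simp: lookup_add algebra_simps)

lemma smultE_single [simp]:
  "smultE c (Poly_Mapping.single w a) = Poly_Mapping.single w (c * a)"
  by (rule poly_mapping_eqI) (simp add: lookup_single when_def)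

lemma linE_eq_sum_superset:
  assumes "finite K" "Poly_Mapping.keys f \<subseteq> K"
  shows "linE \<phi> f = (\<Sum>w\<in>K. smultE (Poly_Mapping.lookup f w) (\<phi> w))"
  unfolding linE_def using assms
  by (intro sum.mono_neutral_left) (auto simp: in_keys_iff)

lemma module_hom_linE:
  fixes \<phi> :: "'s letter list \<Rightarrow> ('s, 'k::comm_ring_1) E"
  shows "module_hom smultE smultE (linE \<phi>)"
proof unfold_locales
  fix f g :: "('s, 'k) E"
  let ?K = "Poly_Mapping.keys f \<union> Poly_Mapping.keys g"
  have "linE \<phi> (f + g) = (\<Sum>w\<in>?K. smultE (Poly_Mapping.lookup (f + g) w) (\<phi> w))"
    by (rule linE_eq_sum_superset) (auto simp: keys_add)
  also have "\<dots> = (\<Sum>w\<in>?K. smultE (Poly_Mapping.lookup f w) (\<phi> w))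
      + (\<Sum>w\<in>?K. smultE (Poly_Mapping.lookup g w) (\<phi> w))"
    by (simp add: lookup_add smultE.scale_left_distrib sum.distrib)
  also have "\<dots> = linE \<phi> f + linE \<phi> g"
    by (subst (1 2) linE_eq_sum_superset[symmetric]) auto
  finally show "linE \<phi> (f + g) = linE \<phi> f + linE \<phi> g" .
next
  fix c and f :: "('s, 'k) E"
  have "linE \<phi> (smultE c f)
      = (\<Sum>w\<in>Poly_Mapping.keys f. smultE (Poly_Mapping.lookup (smultE c f) w) (\<phi> w))"
    by (rule linE_eq_sum_superset) (auto simp: in_keys_iff)
  then show "linE \<phi> (smultE c f) = smultE c (linE \<phi> f)"
    by (simp add: linE_def smultE.scale_sum_right)
qed

lemma linE_single [simp]: "linE \<phi> (Poly_Mapping.single w c) = smultE c (\<phi> w)"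
  by (cases "c = 0") (simp_all add: linE_def)

lemma poly_mapping_eq_sum_singles:
  "f = (\<Sum>w\<in>Poly_Mapping.keys f. Poly_Mapping.single w (Poly_Mapping.lookup f w))"
  by (rule poly_mapping_eqI)
    (auto simp: lookup_sum lookup_single when_def in_keys_iff sum.delta[OF finite_keys])

lemma additive_eq_on_singles:
  fixes L L' :: "('a \<Rightarrow>\<^sub>0 'b::ab_group_add) \<Rightarrow> 'c::ab_group_add"
  assumes "\<And>x y. L (x + y) = L x + L y" "\<And>x y. L' (x + y) = L' x + L' y"
    and "\<And>w c. L (Poly_Mapping.single w c) = L' (Poly_Mapping.single w c)"
  shows "L f = L' f"
proof -
  interpret L: additive L by unfold_locales (rule assms(1))
  interpret L': additive L' by unfold_locales (rule assms(2))
  let ?single = "\<lambda>w. Poly_Mapping.single w (Poly_Mapping.lookup f w)"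
  have "L f = (\<Sum>w\<in>Poly_Mapping.keys f. L (?single w))"
    by (subst poly_mapping_eq_sum_singles) (rule L.sum)
  also have "\<dots> = (\<Sum>w\<in>Poly_Mapping.keys f. L' (?single w))"
    using assms(3) by simp
  also have "\<dots> = L' f"
    by (subst (2) poly_mapping_eq_sum_singles) (rule L'.sum[symmetric])
  finally show ?thesis .
qed

section \<open>Free reduction\<close>

lemma inv_pair_sym: "inv_pair a b \<Longrightarrow> inv_pair b a"
  by (auto simp: inv_pair_def)

lemma inv_pair_unique: "inv_pair a b \<Longrightarrow> inv_pair c b \<Longrightarrow> a = c"
  by (cases a; cases b; cases c) (auto simp: inv_pair_def)

lemma reduced_Cons: "reduced (a # w) \<longleftrightarrow> reduced w \<and> (w = [] \<or> \<not> inv_pair a (hd w))"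
  by (cases w) auto

lemma reduced_red_cons: "reduced w \<Longrightarrow> reduced (red_cons a w)"
  by (cases w) (auto simp: red_cons_def reduced_Cons)

lemma reduced_foldr_red_cons: "reduced z \<Longrightarrow> reduced (foldr red_cons x z)"
  by (induction x) (auto intro: reduced_red_cons)

lemma reduced_red: "reduced (red w)"
  unfolding red_def by (rule reduced_foldr_red_cons) simp

lemma red_reduced: "reduced w \<Longrightarrow> red w = w"
  unfolding red_def by (induction w) (auto simp: reduced_Cons red_cons_def split: list.split)

lemma red_red [simp]: "red (red w) = red w"
  by (simp add: red_reduced reduced_red)

lemma red_Cons: "red (a # w) = red_cons a (red w)"
  by (simp add: red_def)

lemma red_append: "red (x @ y) = foldr red_cons x (red y)"
  by (simp add: red_def)

lemma red_cons_red_cons_inv_pair: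
  assumes "reduced z" "inv_pair a b"
  shows "red_cons a (red_cons b z) = z"
proof (cases z)
  case (Cons c zs)
  show ?thesis
  proof (cases "inv_pair b c")
    case True
    then have "a = c" using assms(2) inv_pair_sym inv_pair_unique by blast
    then show ?thesis using Cons True assms(1) by (cases zs) (auto simp: red_cons_def)
  qed (use Cons assms(2) in \<open>simp add: red_cons_def\<close>)
qed (use assms in \<open>simp add: red_cons_def\<close>)

lemma foldr_red_cons_red:
  assumes "reduced z"
  shows "foldr red_cons (red x) z = foldr red_cons x z"
proof (induction x)
  case (Cons a x)
  show ?case
  proof (cases "\<exists>b ys. red x = b # ys \<and> inv_pair a b")
    case True
    then obtain b ys where b: "red x = b # ys" "inv_pair a b" by blast
    then have "red (a # x) = ys" by (simp add: red_Cons red_cons_def)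
    moreover have "foldr red_cons (a # x) z = red_cons a (red_cons b (foldr red_cons ys z))"
      using Cons.IH b by simp
    ultimately show ?thesis
      using b assms by (simp add: red_cons_red_cons_inv_pair reduced_foldr_red_cons)
  next
    case False
    then have "red (a # x) = a # red x"
      by (cases "red x") (auto simp: red_Cons red_cons_def)
    then show ?thesis using Cons.IH by simp
  qed
qed (simp add: red_def)

lemma red_append_red_left [simp]: "red (red x @ y) = red (x @ y)"
  by (simp add: red_append foldr_red_cons_red reduced_red)

lemma red_append_red_right [simp]: "red (x @ red y) = red (x @ y)"
  by (simp add: red_append)

lemma red_inv_pair: "inv_pair a b \<Longrightarrow> red [a, b] = []"
  by (simp add: red_def red_cons_def)

lemma red_map_up_letter: "red (map up_letter w) = map up_letter (red w)"
proof -
  have up_red_cons: "red_cons (up_letter a) (map up_letter z) = map up_letter (red_cons a z)"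
    for a z
    by (cases z) (auto simp: red_cons_def inv_pair_def up_letter_def)
  show ?thesis
    unfolding red_def by (induction w) (simp_all add: up_red_cons)
qed

section \<open>The group algebra\<close>

lemma multE_eq_linE_left: "multE f g = linE (\<lambda>u. linE (\<lambda>v. gen (u @ v)) g) f"
  unfolding multE_def linE_def gen_def by (simp add: smultE.scale_sum_right)

lemma multE_eq_linE_right: "multE f g = linE (\<lambda>v. linE (\<lambda>u. gen (u @ v)) f) g"
  unfolding multE_def linE_def gen_def
  by (simp add: smultE.scale_sum_right ac_simps) (rule sum.swap)

lemma module_hom_multE_left: "module_hom smultE smultE (\<lambda>f. multE f g)"
  unfolding multE_eq_linE_left by (rule module_hom_linE)

lemma module_hom_multE_right: "module_hom smultE smultE (multE f)"
  unfolding multE_eq_linE_right[abs_def] by (rule module_hom_linE)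

lemmas multE_add_left = module_hom.add[OF module_hom_multE_left]
  and multE_add_right = module_hom.add[OF module_hom_multE_right]
  and multE_smultE_left = module_hom.scale[OF module_hom_multE_left]
  and multE_smultE_right = module_hom.scale[OF module_hom_multE_right]
  and multE_sum_left = module_hom.sum[OF module_hom_multE_left]
  and multE_sum_right = module_hom.sum[OF module_hom_multE_right]
  and multE_uminus_left = module_hom.neg[OF module_hom_multE_left]
  and multE_uminus_right = module_hom.neg[OF module_hom_multE_right]
  and multE_zero_left = module_hom.zero[OF module_hom_multE_left]

lemma gen_red [simp]: "gen (red w) = gen w"
  by (simp add: gen_def)

lemma gen_Cons_Cons_inv_pair: "inv_pair a b \<Longrightarrow> gen (a # b # w) = gen w"
  using red_append_red_left[of "[a, b]" w] by (simp add: gen_def red_inv_pair)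

lemma multE_single_single:
  "multE (Poly_Mapping.single u a) (Poly_Mapping.single v b) =
    Poly_Mapping.single (red (u @ v)) (a * b)"
  by (simp add: multE_eq_linE_left gen_def)

lemma multE_gen_gen: "multE (gen u) (gen v) = gen (u @ v)"
  by (simp add: gen_def multE_single_single)

lemma multE_single_left: "multE (Poly_Mapping.single u a) f = smultE a (multE (gen u) f)"
  by (rule additive_eq_on_singles[where f = f])
    (simp_all add: gen_def multE_single_single multE_add_right smultE.scale_right_distrib)

lemma multE_assoc: "multE (multE f g) h = multE f (multE g h)"
proof (rule additive_eq_on_singles[where f = f])
  fix u a
  show "multE (multE (Poly_Mapping.single u a) g) h = multE (Poly_Mapping.single u a) (multE g h)"
  proof (rule additive_eq_on_singles[where f = g])
    fix v b
    show "multE (multE (Poly_Mapping.single u a) (Poly_Mapping.single v b)) h =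
        multE (Poly_Mapping.single u a) (multE (Poly_Mapping.single v b) h)"
      by (rule additive_eq_on_singles[where f = h]) (simp_all add: multE_single_single
        multE_add_left multE_add_right ac_simps)
  qed (simp_all add: multE_add_left multE_add_right)
qed (simp_all add: multE_add_left multE_add_right)

lemma multE_gen_gen_left: "multE (gen u) (multE (gen v) f) = multE (gen (u @ v)) f"
  by (simp add: multE_assoc[symmetric] multE_gen_gen)

lemma module_hom_upE: "module_hom smultE smultE upE"
  unfolding upE_def by (rule module_hom_linE)

lemmas upE_add = module_hom.add[OF module_hom_upE]
  and upE_smultE = module_hom.scale[OF module_hom_upE]
  and upE_sum = module_hom.sum[OF module_hom_upE]
  and upE_uminus = module_hom.neg[OF module_hom_upE]

lemma upE_gen: "upE (gen w) = gen (map up_letter w)"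
  by (simp add: upE_def gen_def red_map_up_letter)

lemma upE_single: "upE (Poly_Mapping.single w c) = smultE c (gen (map up_letter w))"
  by (simp add: upE_def)

lemma upE_multE: "upE (multE f g) = multE (upE f) (upE g)"
proof (rule additive_eq_on_singles[where f = f])
  fix u a
  show "upE (multE (Poly_Mapping.single u a) g) = multE (upE (Poly_Mapping.single u a)) (upE g)"
    by (rule additive_eq_on_singles[where f = g])
      (simp_all add: multE_single_single upE_single multE_smultE_left multE_smultE_right
        multE_gen_gen multE_add_right upE_add red_map_up_letter[symmetric] ac_simps)
qed (simp_all add: multE_add_left upE_add)

section \<open>The q-derivative\<close>

lemma D_word_id: "D_word R id w = (\<Sum>j<length w.
    multE (multE (gen (take j w)) (R_letter R (w ! j))) (upE (gen (drop (Suc j) w))))"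
  by (simp add: D_word_def)

lemma sum_lessThan_add: "(\<Sum>j<m + n. f j) = (\<Sum>j<m. f j) + (\<Sum>j<n. f (m + j))"
  for m n :: nat
  by (induction n) (simp_all add: ac_simps)

lemma D_word_append:
  "D_word R id (u @ v) = multE (D_word R id u) (upE (gen v)) + multE (gen u) (D_word R id v)"
proof -
  let ?T = "\<lambda>w j. multE (multE (gen (take j w)) (R_letter R (w ! j))) (upE (gen (drop (Suc j) w)))"
  have "D_word R id (u @ v) =
      (\<Sum>j<length u. ?T (u @ v) j) + (\<Sum>j<length v. ?T (u @ v) (length u + j))"
    by (simp add: D_word_id sum_lessThan_add)
  also have "(\<Sum>j<length u. ?T (u @ v) j) = (\<Sum>j<length u. multE (?T u j) (upE (gen v)))"
    by (intro sum.cong) (simp_all add: nth_append multE_gen_gen[symmetric] upE_multE multE_assoc)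
  also have "(\<Sum>j<length v. ?T (u @ v) (length u + j)) = (\<Sum>j<length v. multE (gen u) (?T v j))"
    by (intro sum.cong) (simp_all add: multE_gen_gen[symmetric] multE_assoc)
  finally show ?thesis
    unfolding D_word_id[of R u] D_word_id[of R v] multE_sum_left multE_sum_right .
qed

lemma D_word_Cons:
  "D_word R id (a # w) = multE (D_word R id [a]) (upE (gen w)) + multE (gen [a]) (D_word R id w)"
  using D_word_append[of R "[a]" w] by simp

lemma multE_gen_Nil_D_word: "multE (gen []) (D_word R id w) = D_word R id w"
  by (simp add: D_word_id multE_sum_right multE_assoc[symmetric] multE_gen_gen)

text \<open>This is the only place where the rule R(s_i^-1) = -s_i^-1 R(s_i) s_{i+1}^-1 for inverse
  letters enters.\<close>

lemma D_word_inv_pair: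
  fixes R :: "'s \<times> nat \<Rightarrow> ('s, 'k::comm_ring_1) E"
  assumes "inv_pair a b"
  shows "D_word R id [a, b] = 0"
proof -
  obtain s i t where a: "a = (s, i, t)" by (cases a) auto
  then have b: "b = (s, i, \<not> t)" using assms by (cases b) (auto simp: inv_pair_def)
  have cancel: "gen ((s, j, t') # (s, j, \<not> t') # w) = (gen w :: ('s, 'k) E)" for j t' w
    by (rule gen_Cons_Cons_inv_pair) (simp add: inv_pair_def)
  have "D_word R id [a, b] = multE (multE (gen []) (R_letter R a)) (upE (gen [b]))
      + multE (multE (gen [a]) (R_letter R b)) (upE (gen []))"
    by (simp add: D_word_id lessThan_Suc)
  then show ?thesis
    using a b cancel[of i True] cancel[of i False] cancel[of "Suc i" False]
    by (cases t) (simp_all add: R_letter_def lett_def upE_gen up_letter_def multE_uminus_left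
        multE_uminus_right multE_assoc multE_gen_gen multE_gen_gen_left)
qed

lemma D_word_red: "D_word R id (red w) = D_word R id w"
proof (induction w)
  case (Cons a w)
  have Cons_red: "D_word R id (a # red w) = D_word R id (a # w)"
    unfolding D_word_Cons[of R a "red w"] D_word_Cons[of R a w] Cons.IH gen_red ..
  show ?case
  proof (cases "\<exists>b ys. red w = b # ys \<and> inv_pair a b")
    case True
    then obtain b ys where b: "red w = b # ys" "inv_pair a b" by blast
    have "D_word R id (a # b # ys) = D_word R id ys"
      using D_word_append[of R "[a, b]" ys] b(2)
      by (simp add: D_word_inv_pair gen_Cons_Cons_inv_pair[of a b "[]"] multE_gen_Nil_D_word
          multE_zero_left)
    moreover have "red (a # w) = ys"
      using b by (simp add: red_Cons red_cons_def)
    ultimately show ?thesis using Cons_red b(1) by (simp only:)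
  next
    case False
    then have "red (a # w) = a # red w"
      by (cases "red w") (auto simp: red_Cons red_cons_def)
    then show ?thesis using Cons_red by (simp only:)
  qed
qed (simp add: red_def)

lemma module_hom_qderiv: "module_hom smultE smultE (qderiv R \<rho>)"
  unfolding qderiv_def by (rule module_hom_linE)

lemmas qderiv_add = module_hom.add[OF module_hom_qderiv]
  and qderiv_smultE = module_hom.scale[OF module_hom_qderiv]
  and qderiv_sum = module_hom.sum[OF module_hom_qderiv]

lemma qderiv_single: "qderiv R \<rho> (Poly_Mapping.single w c) = smultE c (D_word R \<rho> w)"
  by (simp add: qderiv_def)

lemma qderiv_gen: "qderiv R id (gen w) = D_word R id w"
  by (simp add: gen_def qderiv_single D_word_red)

lemma qderiv_multE:
  "qderiv R id (multE f g) = multE (qderiv R id f) (upE g) + multE f (qderiv R id g)"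
proof (rule additive_eq_on_singles[where f = f])
  fix u a
  show "qderiv R id (multE (Poly_Mapping.single u a) g) =
      multE (qderiv R id (Poly_Mapping.single u a)) (upE g) +
      multE (Poly_Mapping.single u a) (qderiv R id g)"
  proof (rule additive_eq_on_singles[where f = g])
    fix v b
    have "qderiv R id (multE (Poly_Mapping.single u a) (Poly_Mapping.single v b)) =
        smultE (a * b) (multE (D_word R id u) (upE (gen v)) + multE (gen u) (D_word R id v))"
      by (simp add: multE_single_single qderiv_single D_word_red D_word_append)
    also have "\<dots> = multE (qderiv R id (Poly_Mapping.single u a)) (upE (Poly_Mapping.single v b)) +
        multE (Poly_Mapping.single u a) (qderiv R id (Poly_Mapping.single v b))"
      by (simp add: qderiv_single upE_single upE_gen multE_single_left multE_smultE_left
          multE_smultE_right smultE.scale_right_distrib ac_simps)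
    finally show "qderiv R id (multE (Poly_Mapping.single u a) (Poly_Mapping.single v b)) =
        multE (qderiv R id (Poly_Mapping.single u a)) (upE (Poly_Mapping.single v b)) +
        multE (Poly_Mapping.single u a) (qderiv R id (Poly_Mapping.single v b))" .
  qed (simp_all add: multE_add_left multE_add_right upE_add qderiv_add)
qed (simp_all add: multE_add_left multE_add_right upE_add qderiv_add)

lemma R_letter_up_letter:
  assumes "\<And>s i. R (s, Suc i) = smultE qvar (upE (R (s, i)))"
  shows "R_letter R (up_letter x) = smultE qvar (upE (R_letter R x))"
proof -
  obtain s i t where x: "x = (s, i, t)" by (cases x) auto
  show ?thesis
    by (cases t) (simp_all add: x R_letter_def up_letter_def assms upE_uminus upE_multE upE_gen
        lett_def multE_smultE_left multE_smultE_right)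
qed

lemma D_word_map_up_letter:
  assumes "\<And>s i. R (s, Suc i) = smultE qvar (upE (R (s, i)))"
  shows "D_word R id (map up_letter w) = smultE qvar (upE (D_word R id w))"
  by (simp add: D_word_id upE_sum smultE.scale_sum_right take_map drop_map
      R_letter_up_letter[OF assms] upE_multE upE_gen multE_smultE_left multE_smultE_right)

lemma qderiv_upE:
  assumes "\<And>s i. R (s, Suc i) = smultE qvar (upE (R (s, i)))"
  shows "qderiv R id (upE f) = smultE qvar (upE (qderiv R id f))"
proof -
  have "qderiv R id (upE f) =
      (\<Sum>w\<in>Poly_Mapping.keys f. smultE (Poly_Mapping.lookup f w) (D_word R id (map up_letter w)))"
    by (simp add: upE_def linE_def qderiv_sum qderiv_smultE qderiv_gen)
  also have "\<dots> = smultE qvar (upE (qderiv R id f))"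
    by (simp add: D_word_map_up_letter[OF assms] qderiv_def linE_def upE_sum upE_smultE
        smultE.scale_sum_right mult.commute)
  finally show ?thesis .
qed

section \<open>Gaussian binomial coefficients\<close>

text \<open>The q-Pascal recursion is used in place of the quotient qbinom: it is defined uniformly for
  all k, so the induction on n needs no boundary cases.\<close>

fun qbinom_pascal :: "nat \<Rightarrow> nat \<Rightarrow> 'a::comm_ring_1 poly" where
  "qbinom_pascal n 0 = 1"
| "qbinom_pascal 0 (Suc k) = 0"
| "qbinom_pascal (Suc n) (Suc k) = qbinom_pascal n k + monom 1 (Suc k) * qbinom_pascal n (Suc k)"

lemma qbinom_pascal_eq_0: "n < k \<Longrightarrow> qbinom_pascal n k = 0"
  by (induction n k rule: qbinom_pascal.induct) auto

lemma map_poly_of_int_qbinom_pascal: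
  "map_poly of_int (qbinom_pascal n k) = (qbinom_pascal n k :: 'a::comm_ring_1 poly)"
proof (induction n k rule: qbinom_pascal.induct)
  case (3 n k)
  have "map_poly of_int (p + monom 1 i * r) =
      (map_poly of_int p + monom 1 i * map_poly of_int r :: 'a poly)"
    for p r :: "int poly" and i
    by (rule poly_eqI) (simp add: coeff_map_poly coeff_monom_mult)
  then show ?case using 3 by simp
qed simp_all

lemma qpoch_int_0 [simp]: "qpoch_int 0 = 1"
  by (simp add: qpoch_int_def)

lemma qpoch_int_Suc: "qpoch_int (Suc n) = qpoch_int n * (1 - monom 1 (Suc n))"
  by (simp add: qpoch_int_def prod.nat_ivl_Suc' mult.commute)

lemma qpoch_int_nonzero: "qpoch_int n \<noteq> 0"
proof (induction n)
  case (Suc n)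
  have "coeff (1 - monom 1 (Suc n) :: int poly) 0 \<noteq> 0"
    by (simp add: coeff_monom)
  then have "(1 - monom 1 (Suc n) :: int poly) \<noteq> 0"
    by (metis coeff_0)
  with Suc show ?case
    by (simp add: qpoch_int_Suc)
qed simp

lemma qbinom_pascal_mult_qpoch:
  "k \<le> n \<Longrightarrow> qbinom_pascal n k * (qpoch_int k * qpoch_int (n - k)) = qpoch_int n"
proof (induction n arbitrary: k)
  case (Suc n)
  show ?case
  proof (cases k)
    case (Suc k')
    let ?m = "\<lambda>i. monom (1::int) i"
    have k': "k' \<le> n" using Suc Suc.prems by simp
    have A: "qbinom_pascal n k' * (qpoch_int (Suc k') * qpoch_int (n - k')) =
        qpoch_int n * (1 - ?m (Suc k'))"
      using Suc.IH[OF k'] by (simp add: qpoch_int_Suc algebra_simps)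
    have B: "?m (Suc k') * qbinom_pascal n (Suc k') * (qpoch_int (Suc k') * qpoch_int (n - k'))
        = qpoch_int n * (?m (Suc k') - ?m (Suc n))"
    proof (cases "k' < n")
      case True
      then have "n - k' = Suc (n - Suc k')" by simp
      then have "?m (Suc k') * qbinom_pascal n (Suc k') * (qpoch_int (Suc k') * qpoch_int (n - k'))
          = ?m (Suc k') * (1 - ?m (n - k')) *
            (qbinom_pascal n (Suc k') * (qpoch_int (Suc k') * qpoch_int (n - Suc k')))"
        by (simp add: qpoch_int_Suc algebra_simps)
      also have "\<dots> = qpoch_int n * (?m (Suc k') - ?m (Suc k') * ?m (n - k'))"
        using Suc.IH[of "Suc k'"] True by (simp add: algebra_simps)
      also have "?m (Suc k') * ?m (n - k') = ?m (Suc n)"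
        using True by (simp add: mult_monom)
      finally show ?thesis .
    qed (use k' in \<open>simp add: qbinom_pascal_eq_0\<close>)
    have "qbinom_pascal (Suc n) k * (qpoch_int k * qpoch_int (Suc n - k)) =
        qbinom_pascal n k' * (qpoch_int (Suc k') * qpoch_int (n - k')) +
        ?m (Suc k') * qbinom_pascal n (Suc k') * (qpoch_int (Suc k') * qpoch_int (n - k'))"
      by (simp add: Suc algebra_simps)
    also have "\<dots> = qpoch_int n * (1 - ?m (Suc n))"
      unfolding A B by (simp add: algebra_simps)
    finally show ?thesis by (simp add: qpoch_int_Suc)
  qed simp
qed simp

lemma qbinom_eq_qbinom_pascal:
  assumes "k \<le> n"
  shows "qbinom n k = qbinom_pascal n k"
proof -
  have "qpoch_int k * qpoch_int (n - k) \<noteq> 0"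
    by (simp add: qpoch_int_nonzero)
  then have "qpoch_int n div (qpoch_int k * qpoch_int (n - k)) = qbinom_pascal n k"
    by (simp flip: qbinom_pascal_mult_qpoch[OF assms])
  then show ?thesis
    by (simp add: qbinom_def map_poly_of_int_qbinom_pascal)
qed

lemma qvar_power: "qvar ^ n = monom 1 n"
  by (simp add: qvar_def monom_altdef)

section \<open>The q-Leibniz formula\<close>

lemma twisted_leibniz_funpow:
  fixes D \<sigma> :: "('s, 'k::comm_ring_1) E \<Rightarrow> ('s, 'k) E"
  assumes D_linear: "module_hom smultE smultE D"
    and \<sigma>_smultE: "\<And>c x. \<sigma> (smultE c x) = smultE c (\<sigma> x)"
    and D_\<sigma>: "\<And>x. D (\<sigma> x) = smultE qvar (\<sigma> (D x))"
    and D_multE: "\<And>x y. D (multE x y) = multE (D x) (\<sigma> y) + multE x (D y)"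
  shows "(D ^^ n) (multE f g) =
    (\<Sum>k\<le>n. smultE (qbinom_pascal n k) (multE ((D ^^ k) f) ((\<sigma> ^^ k) ((D ^^ (n - k)) g))))"
proof (induction n)
  case (Suc n)
  have D_\<sigma>_funpow: "D ((\<sigma> ^^ k) x) = smultE (qvar ^ k) ((\<sigma> ^^ k) (D x))" for k x
    by (induction k) (simp_all add: D_\<sigma> \<sigma>_smultE mult.commute)
  define T where "T k = multE ((D ^^ k) f) ((\<sigma> ^^ k) ((D ^^ (Suc n - k)) g))" for k
  have D_summand: "D (multE ((D ^^ k) f) ((\<sigma> ^^ k) ((D ^^ (n - k)) g))) =
      T (Suc k) + smultE (qvar ^ k) (T k)" if "k \<le> n" for k
  proof -
    have "Suc n - k = Suc (n - k)" using that by simp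
    then show ?thesis by (simp add: T_def D_multE D_\<sigma>_funpow multE_smultE_right)
  qed
  have "(D ^^ Suc n) (multE f g) = (\<Sum>k\<le>n. smultE (qbinom_pascal n k) (T (Suc k)))
      + (\<Sum>k\<le>n. smultE (qvar ^ k * qbinom_pascal n k) (T k))"
    by (simp add: Suc.IH module_hom.sum[OF D_linear] module_hom.scale[OF D_linear] D_summand
        smultE.scale_right_distrib sum.distrib mult.commute)
  also have "(\<Sum>k\<le>n. smultE (qvar ^ k * qbinom_pascal n k) (T k)) =
      (\<Sum>k\<le>Suc n. smultE (qvar ^ k * qbinom_pascal n k) (T k))"
    by (simp add: qbinom_pascal_eq_0)
  also have "\<dots> = T 0 + (\<Sum>k\<le>n. smultE (qvar ^ Suc k * qbinom_pascal n (Suc k)) (T (Suc k)))"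
    by (subst sum.atMost_Suc_shift) simp
  also have "(\<Sum>k\<le>n. smultE (qbinom_pascal n k) (T (Suc k))) + \<dots> =
      (\<Sum>k\<le>Suc n. smultE (qbinom_pascal (Suc n) k) (T k))"
    by (subst sum.atMost_Suc_shift)
      (simp add: qvar_power smultE.scale_left_distrib sum.distrib del: power_Suc)
  finally show ?case
    by (simp add: T_def)
qed simp

theorem proposition4p7:
  fixes R :: "'s \<times> nat \<Rightarrow> ('s, 'k::{comm_ring_1, ring_char_0}) E"
    and \<rho> :: "('s, 'k) E \<Rightarrow> ('s, 'k) E"
    and f g :: "('s, 'k) E"
    and n :: nat
  assumes "\<forall>x. inE (R x)"
    and "q_linear R \<rho>"
    and "n \<ge> 1"
    and "inE f" and "inE g"
  shows "(qderiv R \<rho> ^^ n) (multE f g) =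
    (\<Sum>k=0..n. smultE (qbinom n k)
       (multE ((qderiv R \<rho> ^^ k) f) ((upE ^^ k) ((qderiv R \<rho> ^^ (n - k)) g))))"
proof -
  have \<rho>: "\<rho> = id" and R_shift: "\<And>s i. R (s, Suc i) = smultE qvar (upE (R (s, i)))"
    using assms(2) by (auto simp: q_linear_def)
  have "(qderiv R id ^^ n) (multE f g) = (\<Sum>k\<le>n. smultE (qbinom_pascal n k)
      (multE ((qderiv R id ^^ k) f) ((upE ^^ k) ((qderiv R id ^^ (n - k)) g))))"
    by (rule twisted_leibniz_funpow[OF module_hom_qderiv upE_smultE qderiv_upE[OF R_shift]
          qderiv_multE])
  also have "\<dots> = (\<Sum>k=0..n. smultE (qbinom n k)
      (multE ((qderiv R id ^^ k) f) ((upE ^^ k) ((qderiv R id ^^ (n - k)) g))))"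
    by (simp add: atLeast0AtMost qbinom_eq_qbinom_pascal)
  finally show ?thesis
    unfolding \<rho> .
qed

end
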